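(* Let $A_1$ and $A_2$ be finite alphabets, each with at least two symbols, and give $A_1^*$ and $A_2^*$ their standard self-similar structures. Then a homeomorphism $f\colon A_1^\omega\to A_2^\omega$ is rational in the self-similar-tree sense if and only if it is computed by a nondegenerate asynchronous transducer with input alphabet $A_1$ and output alphabet $A_2$.
   Context: For a finite alphabet $A$, $A^*$ is the rooted tree of finite words, rooted at the empty word, with an edge from $w$ to $wa$ for each $a\in A$; its boundary is identified with $A^\omega$. Its standard self-similar structure has a single vertex type, and for words $\alpha,\beta$ exactly one morphism $A^*_\alpha\to A^*_\beta$, namely the prefix replacement $\alpha\gamma\mapsto\beta\gamma$; here $A^*_\alpha$ is the subtree of words with prefix $\alpha$. For self-similar trees $T,T'$, a homeomorphism $f\colon\partial T\to\partial T'$ has equivalent restrictions at same-type vertices $v,w$ of $T$ if there exist same-type vertices $x,y$ of $T'$ and morphisms $\varphi\colon T_v\to T_w$, $\psi\colon T'_x\to T'_y$ such that $f(\partial T_v)\subseteq\partial T'_x$, $f(\partial T_w)\subseteq\partial T'_y$ and $f\circ\varphi_*=\psi_*\circ f$ on $\partial T_v$, where $\varphi_*,\psi_*$ are the induced boundary homeomorphisms. $f$ is rational in the self-similar-tree sense if this equivalence relation on the vertices of $T$ has finitely many classes. A transducer with input alphabet $A_1$ and output alphabet $A_2$ has finitely many states, an initial state, a transition function $Q\times A_1\to Q$ and an output function $Q\times A_1\to A_2^*$ (finite, possibly empty, words). It is nondegenerate if the concatenated output on every infinite input is infinite. *)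

theory Defs
  imports "HOL-Analysis.Analysis" "HOL-Library.Omega_Words_Fun"
begin

definition cantor_top :: "('a word) topology" where
  "cantor_top = product_topology (\<lambda>_::nat. discrete_topology (UNIV :: 'a set)) UNIV"

text \<open>Boundary of the subtree of words with prefix v: the cylinder of v.\<close>
definition cyl :: "'a list \<Rightarrow> 'a word set" where
  "cyl v = range (\<lambda>\<xi>. v \<frown> \<xi>)"

text \<open>Equivalent restrictions of f at vertices v, w of A1^* (standard self-similar
  structure: one vertex type, unique morphism = prefix replacement).  The induced
  boundary maps are phi_*(v xi) = w xi and psi_*(x eta) = y eta.\<close>
definition equiv_restr :: "('a word \<Rightarrow> 'b word) \<Rightarrow> 'a list \<Rightarrow> 'a list \<Rightarrow> bool" where
  "equiv_restr f v w \<longleftrightarrow> (\<exists>x y. f ` cyl v \<subseteq> cyl x \<and> f ` cyl w \<subseteq> cyl y \<and>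
     (\<forall>\<xi> \<eta>. f (v \<frown> \<xi>) = x \<frown> \<eta> \<longrightarrow> f (w \<frown> \<xi>) = y \<frown> \<eta>))"

definition ss_rational :: "('a word \<Rightarrow> 'b word) \<Rightarrow> bool" where
  "ss_rational f \<longleftrightarrow> finite (UNIV // {(v, w). equiv_restr f v w})"

definition is_transducer ::
  "nat set \<Rightarrow> nat \<Rightarrow> (nat \<Rightarrow> 'a \<Rightarrow> nat) \<Rightarrow> (nat \<Rightarrow> 'a \<Rightarrow> 'b list) \<Rightarrow> bool" where
  "is_transducer Q q0 \<delta> lam \<longleftrightarrow> finite Q \<and> q0 \<in> Q \<and> (\<forall>q\<in>Q. \<forall>a. \<delta> q a \<in> Q)"

fun trun :: "nat \<Rightarrow> (nat \<Rightarrow> 'a \<Rightarrow> nat) \<Rightarrow> 'a word \<Rightarrow> nat \<Rightarrow> nat" where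
  "trun q0 \<delta> \<xi> 0 = q0"
| "trun q0 \<delta> \<xi> (Suc n) = \<delta> (trun q0 \<delta> \<xi> n) (\<xi> n)"

definition tout :: "nat \<Rightarrow> (nat \<Rightarrow> 'a \<Rightarrow> nat) \<Rightarrow> (nat \<Rightarrow> 'a \<Rightarrow> 'b list) \<Rightarrow> 'a word \<Rightarrow> nat \<Rightarrow> 'b list" where
  "tout q0 \<delta> lam \<xi> n = concat (map (\<lambda>i. lam (trun q0 \<delta> \<xi> i) (\<xi> i)) [0..<n])"

definition nondegenerate ::
  "nat \<Rightarrow> (nat \<Rightarrow> 'a \<Rightarrow> nat) \<Rightarrow> (nat \<Rightarrow> 'a \<Rightarrow> 'b list) \<Rightarrow> bool" where
  "nondegenerate q0 \<delta> lam \<longleftrightarrow> (\<forall>\<xi>::'a word. \<forall>m. \<exists>n. m \<le> length (tout q0 \<delta> lam \<xi> n))"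

definition computes ::
  "nat \<Rightarrow> (nat \<Rightarrow> 'a \<Rightarrow> nat) \<Rightarrow> (nat \<Rightarrow> 'a \<Rightarrow> 'b list) \<Rightarrow> ('a word \<Rightarrow> 'b word) \<Rightarrow> bool" where
  "computes q0 \<delta> lam f \<longleftrightarrow>
     (\<forall>\<xi> n. tout q0 \<delta> lam \<xi> n = prefix (length (tout q0 \<delta> lam \<xi> n)) (f \<xi>))"

end

theory Submission
  imports Defs
begin

text \<open>Restrictions of \<open>f\<close> at \<open>v\<close> and \<open>w\<close> are equivalent exactly when
  \<open>f (v \<frown> \<xi>) = x \<frown> g \<xi>\<close> and \<open>f (w \<frown> \<xi>) = y \<frown> g \<xi>\<close> for a single tail map \<open>g\<close>.
  If a nondegenerate transducer computes \<open>f\<close>, the tail after reading \<open>v\<close> is the map computed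
  from the state reached, so vertices reaching the same state are equivalent and the finite state
  set bounds the number of classes.
  Conversely, stripping from \<open>\<lambda>\<xi>. f (v \<frown> \<xi>)\<close> the longest prefix common to all its values
  gives a normal form of the restriction at \<open>v\<close> that is constant on equivalence classes; these
  finitely many normal forms are the states of a transducer which, on reading a letter, outputs
  the newly forced common prefix. Injectivity makes every restriction nonconstant, so the normal
  form exists; surjectivity makes \<open>f\<close> its own normal form, the initial state; and continuity
  makes the output grow, since the first \<open>m\<close> output letters depend on a finite input prefix
  while a normal form has no nonempty common prefix.\<close>

lemma cyl_iff: "u \<in> cyl x \<longleftrightarrow> prefix (length x) u = x"
proof
  assume "prefix (length x) u = x"
  then have "u = x \<frown> suffix (length x) u" by (metis prefix_suffix)
  then show "u \<in> cyl x" unfolding cyl_def by blast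
qed (auto simp: cyl_def)

lemma conc_in_cyl [simp]: "x \<frown> \<eta> \<in> cyl x"
  by (auto simp: cyl_def)

lemma conc_in_cyl_append_iff: "x \<frown> \<eta> \<in> cyl (x @ w) \<longleftrightarrow> \<eta> \<in> cyl w"
  by (auto simp: cyl_def simp flip: conc_conc)

lemma conc_eq_conc_shorter:
  assumes "y \<frown> \<alpha> = x \<frown> \<beta>" "length y \<le> length x"
  shows "\<alpha> = drop (length y) x \<frown> \<beta>"
proof -
  have "take (length y) x = y"
    using arg_cong[OF assms(1), of "prefix (length y)"] assms(2) by simp
  then have "x = y @ drop (length y) x" by (metis append_take_drop_id)
  then have "y \<frown> \<alpha> = y \<frown> (drop (length y) x \<frown> \<beta>)"
    using assms(1) by (metis conc_conc)
  then show "\<alpha> = drop (length y) x \<frown> \<beta>" by (rule same_concat_eq[THEN iffD1])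
qed

lemma common_tail_cases:
  assumes "\<And>\<xi>. y \<frown> g \<xi> = x \<frown> h \<xi>"
  shows "(\<exists>z. \<forall>\<xi>. g \<xi> = z \<frown> h \<xi>) \<or> (\<exists>z. \<forall>\<xi>. h \<xi> = z \<frown> g \<xi>)"
  using conc_eq_conc_shorter[OF assms] conc_eq_conc_shorter[OF assms[symmetric]]
  by (metis nat_le_linear)

section \<open>Equivalent restrictions\<close>

lemma equiv_restr_iff:
  "equiv_restr f v w \<longleftrightarrow> (\<exists>x y g. \<forall>\<xi>. f (v \<frown> \<xi>) = x \<frown> g \<xi> \<and> f (w \<frown> \<xi>) = y \<frown> g \<xi>)"
proof
  assume "equiv_restr f v w"
  then obtain x y where v: "f ` cyl v \<subseteq> cyl x"
    and vw: "\<forall>\<xi> \<eta>. f (v \<frown> \<xi>) = x \<frown> \<eta> \<longrightarrow> f (w \<frown> \<xi>) = y \<frown> \<eta>"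
    unfolding equiv_restr_def by blast
  have "f (v \<frown> \<xi>) = x \<frown> suffix (length x) (f (v \<frown> \<xi>))" for \<xi>
    using v conc_in_cyl[of v \<xi>] by (metis cyl_iff image_subset_iff prefix_suffix)
  with vw show "\<exists>x y g. \<forall>\<xi>. f (v \<frown> \<xi>) = x \<frown> g \<xi> \<and> f (w \<frown> \<xi>) = y \<frown> g \<xi>"
    by (intro exI[of _ x] exI[of _ y] exI[of _ "\<lambda>\<xi>. suffix (length x) (f (v \<frown> \<xi>))"]) auto
next
  assume "\<exists>x y g. \<forall>\<xi>. f (v \<frown> \<xi>) = x \<frown> g \<xi> \<and> f (w \<frown> \<xi>) = y \<frown> g \<xi>"
  then obtain x y g where "\<forall>\<xi>. f (v \<frown> \<xi>) = x \<frown> g \<xi> \<and> f (w \<frown> \<xi>) = y \<frown> g \<xi>"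
    by blast
  then show "equiv_restr f v w"
    unfolding equiv_restr_def by (intro exI[of _ x] exI[of _ y]) (auto simp: cyl_def)
qed

lemma equiv_restr_trans:
  assumes "equiv_restr f v w" "equiv_restr f w u"
  shows "equiv_restr f v u"
proof -
  obtain x y g where vw: "\<And>\<xi>. f (v \<frown> \<xi>) = x \<frown> g \<xi>" "\<And>\<xi>. f (w \<frown> \<xi>) = y \<frown> g \<xi>"
    using assms(1) unfolding equiv_restr_iff by blast
  obtain x' y' h where wu: "\<And>\<xi>. f (w \<frown> \<xi>) = x' \<frown> h \<xi>" "\<And>\<xi>. f (u \<frown> \<xi>) = y' \<frown> h \<xi>"
    using assms(2) unfolding equiv_restr_iff by blast
  have "\<And>\<xi>. y \<frown> g \<xi> = x' \<frown> h \<xi>" using vw(2) wu(1) by metis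
  then consider z where "\<And>\<xi>. g \<xi> = z \<frown> h \<xi>" | z where "\<And>\<xi>. h \<xi> = z \<frown> g \<xi>"
    using common_tail_cases by blast
  then show ?thesis
  proof cases
    case (1 z)
    then have "\<forall>\<xi>. f (v \<frown> \<xi>) = (x @ z) \<frown> h \<xi> \<and> f (u \<frown> \<xi>) = y' \<frown> h \<xi>"
      using vw(1) wu(2) by simp
    then show ?thesis unfolding equiv_restr_iff by blast
  next
    case (2 z)
    then have "\<forall>\<xi>. f (v \<frown> \<xi>) = x \<frown> g \<xi> \<and> f (u \<frown> \<xi>) = (y' @ z) \<frown> g \<xi>"
      using vw(1) wu(2) by simp
    then show ?thesis unfolding equiv_restr_iff by blast
  qed
qed

lemma equiv_equiv_restr: "equiv UNIV {(v, w). equiv_restr f v w}"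
proof (rule equivI)
  show "refl_on UNIV {(v, w). equiv_restr f v w}"
    unfolding refl_on_def equiv_restr_iff by (auto intro!: exI[of _ "[]"])
  show "sym {(v, w). equiv_restr f v w}"
    unfolding sym_def equiv_restr_iff by blast
  show "trans {(v, w). equiv_restr f v w}"
    unfolding trans_def using equiv_restr_trans by blast
qed simp

lemma finite_quotient_kernel_iff: "finite (UNIV // kernel g) \<longleftrightarrow> finite (range g)"
  using bij_betw_finite[OF bij_betw_image_quotient_kernel] by blast

section \<open>Transducers on finite inputs\<close>

lemma trun_eq_foldl: "trun q \<delta> \<xi> n = foldl \<delta> q (prefix n \<xi>)"
  by (induction n) simp_all

lemma foldl_in_transducer_states:
  "is_transducer Q q0 \<delta> lam \<Longrightarrow> q \<in> Q \<Longrightarrow> foldl \<delta> q v \<in> Q"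
  by (induction v arbitrary: q) (auto simp: is_transducer_def)

primrec tout_list ::
  "nat \<Rightarrow> (nat \<Rightarrow> 'a \<Rightarrow> nat) \<Rightarrow> (nat \<Rightarrow> 'a \<Rightarrow> 'b list) \<Rightarrow> 'a list \<Rightarrow> 'b list" where
  "tout_list q \<delta> lam [] = []"
| "tout_list q \<delta> lam (a # v) = lam q a @ tout_list (\<delta> q a) \<delta> lam v"

lemma tout_list_append:
  "tout_list q \<delta> lam (v @ u) = tout_list q \<delta> lam v @ tout_list (foldl \<delta> q v) \<delta> lam u"
  by (induction v arbitrary: q) simp_all

lemma tout_eq_tout_list: "tout q \<delta> lam \<xi> n = tout_list q \<delta> lam (prefix n \<xi>)"
  by (induction n) (simp_all add: tout_def tout_list_append trun_eq_foldl)

lemma length_tout_mono: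
  assumes "n \<le> n'"
  shows "length (tout q \<delta> lam \<xi> n) \<le> length (tout q \<delta> lam \<xi> n')"
proof -
  obtain k where "n' = n + k" using assms le_Suc_ex by blast
  then show ?thesis by (simp add: tout_eq_tout_list subsequence_append tout_list_append)
qed

lemma computes_iff_cyl:
  "computes q \<delta> lam f \<longleftrightarrow> (\<forall>v \<xi>. f (v \<frown> \<xi>) \<in> cyl (tout_list q \<delta> lam v))"
proof
  assume "computes q \<delta> lam f"
  then have "tout q \<delta> lam (v \<frown> \<xi>) (length v) = prefix (length (tout_list q \<delta> lam v)) (f (v \<frown> \<xi>))"
    for v \<xi> unfolding computes_def by (metis prefix_conc_length tout_eq_tout_list)
  then show "\<forall>v \<xi>. f (v \<frown> \<xi>) \<in> cyl (tout_list q \<delta> lam v)"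
    by (simp add: cyl_iff tout_eq_tout_list)
next
  assume "\<forall>v \<xi>. f (v \<frown> \<xi>) \<in> cyl (tout_list q \<delta> lam v)"
  then have "f (prefix n \<xi> \<frown> suffix n \<xi>) \<in> cyl (tout q \<delta> lam \<xi> n)" for \<xi> n
    by (simp only: tout_eq_tout_list)
  then show "computes q \<delta> lam f"
    unfolding computes_def cyl_iff by simp
qed

lemma computes_restriction:
  assumes "computes q \<delta> lam f"
  obtains g where "\<And>\<xi>. f (v \<frown> \<xi>) = tout_list q \<delta> lam v \<frown> g \<xi>"
    and "computes (foldl \<delta> q v) \<delta> lam g"
proof
  let ?o = "tout_list q \<delta> lam v" and ?g = "\<lambda>\<xi>. suffix (length (tout_list q \<delta> lam v)) (f (v \<frown> \<xi>))"
  show decomp: "f (v \<frown> \<xi>) = ?o \<frown> ?g \<xi>" for \<xi>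
    using assms unfolding computes_iff_cyl cyl_iff by (metis prefix_suffix)
  have "f ((v @ u) \<frown> \<zeta>) \<in> cyl (?o @ tout_list (foldl \<delta> q v) \<delta> lam u)" for u \<zeta>
    using assms unfolding computes_iff_cyl by (metis tout_list_append)
  then show "computes (foldl \<delta> q v) \<delta> lam ?g"
    unfolding computes_iff_cyl by (metis conc_conc conc_in_cyl_append_iff decomp)
qed

lemma nondegenerate_foldl:
  assumes "nondegenerate q \<delta> lam"
  shows "nondegenerate (foldl \<delta> q v) \<delta> lam"
  unfolding nondegenerate_def
proof (intro allI)
  fix \<xi> m
  obtain n where n: "length (tout_list q \<delta> lam v) + m \<le> length (tout q \<delta> lam (v \<frown> \<xi>) n)"
    using assms unfolding nondegenerate_def by blast
  also have "\<dots> \<le> length (tout q \<delta> lam (v \<frown> \<xi>) (length v + n))"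
    by (rule length_tout_mono) simp
  also have "\<dots> = length (tout_list q \<delta> lam v) + length (tout (foldl \<delta> q v) \<delta> lam \<xi> n)"
    by (simp add: tout_eq_tout_list tout_list_append)
  finally show "\<exists>n. m \<le> length (tout (foldl \<delta> q v) \<delta> lam \<xi> n)" by auto
qed

lemma computes_unique:
  assumes "nondegenerate q \<delta> lam" "computes q \<delta> lam g" "computes q \<delta> lam h"
  shows "g = h"
proof (intro ext)
  fix \<xi> i
  obtain n where n: "Suc i \<le> length (tout q \<delta> lam \<xi> n)"
    using assms(1) unfolding nondegenerate_def by blast
  have "prefix (length (tout q \<delta> lam \<xi> n)) (g \<xi>) = prefix (length (tout q \<delta> lam \<xi> n)) (h \<xi>)"
    using assms(2,3) unfolding computes_def by metis
  then show "g \<xi> i = h \<xi> i"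
    using n by (metis Suc_le_eq add_0 diff_zero subsequence_nth)
qed

lemma ss_rational_if_computes:
  assumes "is_transducer Q q0 \<delta> lam" "nondegenerate q0 \<delta> lam" "computes q0 \<delta> lam f"
  shows "ss_rational f"
proof -
  have "kernel (foldl \<delta> q0) \<subseteq> {(v, w). equiv_restr f v w}"
  proof (safe)
    fix v w assume "(v, w) \<in> kernel (foldl \<delta> q0)"
    then have same_state: "foldl \<delta> q0 v = foldl \<delta> q0 w" by (simp add: kernel_def)
    obtain g where g: "\<And>\<xi>. f (v \<frown> \<xi>) = tout_list q0 \<delta> lam v \<frown> g \<xi>"
      "computes (foldl \<delta> q0 v) \<delta> lam g"
      using computes_restriction[OF assms(3)] by blast
    obtain h where h: "\<And>\<xi>. f (w \<frown> \<xi>) = tout_list q0 \<delta> lam w \<frown> h \<xi>"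
      "computes (foldl \<delta> q0 w) \<delta> lam h"
      using computes_restriction[OF assms(3)] by blast
    have "g = h"
      using computes_unique[OF nondegenerate_foldl[OF assms(2)] g(2)] h(2) same_state by simp
    then show "equiv_restr f v w" unfolding equiv_restr_iff using g(1) h(1) by blast
  qed
  moreover have "range (foldl \<delta> q0) \<subseteq> Q"
    using foldl_in_transducer_states[OF assms(1)] assms(1) by (auto simp: is_transducer_def)
  then have "finite (UNIV // kernel (foldl \<delta> q0))"
    using assms(1) finite_subset by (auto simp: is_transducer_def finite_quotient_kernel_iff)
  ultimately show ?thesis
    unfolding ss_rational_def using finite_refines_finite equiv_kernel equiv_equiv_restr by blast
qed

section \<open>Longest common prefix of the values of a map\<close>

definition nonconstant :: "('a \<Rightarrow> 'b) \<Rightarrow> bool" where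
  "nonconstant h \<longleftrightarrow> (\<exists>z1 z2. h z1 \<noteq> h z2)"

text \<open>For constant \<open>h\<close> this is the least element of the empty set, a junk value.\<close>

definition lcp_length :: "('a \<Rightarrow> 'b word) \<Rightarrow> nat" where
  "lcp_length h = (LEAST k. \<exists>z. h z k \<noteq> h undefined k)"

definition strip_lcp :: "('a \<Rightarrow> 'b word) \<Rightarrow> 'a \<Rightarrow> 'b word" where
  "strip_lcp h z = suffix (lcp_length h) (h z)"

lemma nonconstant_conc_iff [simp]: "nonconstant (\<lambda>z. x \<frown> g z) \<longleftrightarrow> nonconstant g"
  by (simp add: nonconstant_def)

lemma nonconstant_imp_ex_diff:
  assumes "nonconstant h"
  shows "\<exists>k z. h z k \<noteq> h undefined k"
proof -
  obtain z1 z2 k where "h z1 k \<noteq> h z2 k"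
    using assms unfolding nonconstant_def by blast
  then show ?thesis by metis
qed

lemma below_lcp_length: "i < lcp_length h \<Longrightarrow> h z i = h z' i"
  unfolding lcp_length_def by (metis (mono_tags, lifting) not_less_Least)

lemma lcp_length_maximal:
  assumes "nonconstant h" "\<And>z i. i < k \<Longrightarrow> h z i = h z' i"
  shows "k \<le> lcp_length h"
proof -
  have "\<exists>z. h z (lcp_length h) \<noteq> h undefined (lcp_length h)"
    unfolding lcp_length_def using nonconstant_imp_ex_diff[OF assms(1)] by (rule LeastI_ex)
  then show ?thesis using assms(2) by (metis not_le)
qed

lemma lcp_decomp: "h z = prefix (lcp_length h) (h z') \<frown> strip_lcp h z"
proof -
  have "prefix (lcp_length h) (h z) = prefix (lcp_length h) (h z')"
    by (simp add: subsequence_def below_lcp_length[of _ h z z'])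
  then show ?thesis unfolding strip_lcp_def by (metis prefix_suffix)
qed

lemma lcp_length_conc:
  assumes "nonconstant g"
  shows "lcp_length (\<lambda>z. x \<frown> g z) = length x + lcp_length g"
  unfolding lcp_length_def
proof (rule Least_equality)
  show "\<exists>z. (x \<frown> g z) (length x + (LEAST k. \<exists>z. g z k \<noteq> g undefined k))
      \<noteq> (x \<frown> g undefined) (length x + (LEAST k. \<exists>z. g z k \<noteq> g undefined k))"
    using LeastI_ex[OF nonconstant_imp_ex_diff[OF assms]] by simp
next
  fix k assume "\<exists>z. (x \<frown> g z) k \<noteq> (x \<frown> g undefined) k"
  then obtain z where z: "(x \<frown> g z) k \<noteq> (x \<frown> g undefined) k" by blast
  then have "length x \<le> k" by (metis conc_fst not_le)
  then have "g z (k - length x) \<noteq> g undefined (k - length x)" using z by simp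
  then have "(LEAST k. \<exists>z. g z k \<noteq> g undefined k) \<le> k - length x" by (blast intro: Least_le)
  then show "length x + (LEAST k. \<exists>z. g z k \<noteq> g undefined k) \<le> k"
    using \<open>length x \<le> k\<close> by simp
qed

lemma strip_lcp_conc:
  "nonconstant g \<Longrightarrow> strip_lcp (\<lambda>z. x \<frown> g z) = strip_lcp g"
  by (simp add: fun_eq_iff strip_lcp_def lcp_length_conc)

lemma nonconstant_strip_lcp: "nonconstant h \<Longrightarrow> nonconstant (strip_lcp h)"
  by (metis lcp_decomp nonconstant_def)

lemma lcp_length_strip_lcp:
  assumes "nonconstant h"
  shows "lcp_length (strip_lcp h) = 0"
proof -
  let ?p = "prefix (lcp_length h) (h undefined)"
  have decomp: "(\<lambda>z. ?p \<frown> strip_lcp h z) = h"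
    by (rule ext) (rule lcp_decomp[symmetric])
  have "lcp_length (\<lambda>z. ?p \<frown> strip_lcp h z) = length ?p + lcp_length (strip_lcp h)"
    by (rule lcp_length_conc[OF nonconstant_strip_lcp[OF assms]])
  then show ?thesis by (simp only: decomp) simp
qed

lemma lcp_length_surj:
  fixes h :: "'a \<Rightarrow> 'b word" and b b' :: 'b
  assumes "surj h" "b \<noteq> b'"
  shows "lcp_length h = 0"
proof -
  obtain z1 z2 where "h z1 = (\<lambda>_. b)" "h z2 = (\<lambda>_. b')"
    using assms(1) by (metis surjD)
  then have "\<exists>z. h z 0 \<noteq> h undefined 0" using assms(2) by metis
  then show ?thesis unfolding lcp_length_def by simp
qed

section \<open>Continuity on Cantor space\<close>

lemma topspace_cantor_top [simp]: "topspace cantor_top = UNIV"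
  by (simp add: cantor_top_def)

lemma openin_cantor_cylinder: "openin cantor_top {\<eta>. \<forall>i<m. \<eta> i = c i}"
proof -
  have "openin cantor_top {\<eta> \<in> topspace cantor_top. \<eta> i \<in> {c i}}" for i
    unfolding cantor_top_def
    by (rule openin_continuous_map_preimage[OF continuous_map_product_projection]) auto
  then have "openin cantor_top ((\<Inter>i\<in>{..<m}. {\<eta>. \<eta> i = c i}) \<inter> topspace cantor_top)"
    by (intro openin_INT) auto
  moreover have "(\<Inter>i\<in>{..<m}. {\<eta>. \<eta> i = c i}) \<inter> topspace cantor_top = {\<eta>. \<forall>i<m. \<eta> i = c i}"
    by auto
  ultimately show ?thesis by simp
qed

lemma openin_cantor_top_contains_cylinder:
  assumes "openin cantor_top S" "\<xi> \<in> S"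
  obtains n where "\<And>\<zeta>. \<forall>i<n. \<zeta> i = \<xi> i \<Longrightarrow> \<zeta> \<in> S"
proof -
  obtain U where U: "finite {i. U i \<noteq> UNIV}" "\<xi> \<in> Pi\<^sub>E UNIV U" "Pi\<^sub>E UNIV U \<subseteq> S"
    using assms unfolding cantor_top_def openin_product_topology_alt by auto
  obtain n where n: "{i. U i \<noteq> UNIV} \<subseteq> {..<n}"
    using U(1) finite_nat_bounded by blast
  have "\<zeta> \<in> S" if "\<forall>i<n. \<zeta> i = \<xi> i" for \<zeta>
  proof -
    have "U i = UNIV" if "\<not> i < n" for i using n that by blast
    then have "\<zeta> i \<in> U i" for i
      using that U(2) by (cases "i < n") (auto simp: PiE_iff)
    then show ?thesis using U(3) by auto
  qed
  then show thesis using that by blast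
qed

lemma continuous_map_cantor_prefix:
  assumes "continuous_map cantor_top cantor_top f"
  obtains n where "\<And>\<zeta> i. \<forall>j<n. \<zeta> j = \<xi> j \<Longrightarrow> i < m \<Longrightarrow> f \<zeta> i = f \<xi> i"
proof -
  have "openin cantor_top {\<zeta> \<in> topspace cantor_top. f \<zeta> \<in> {\<eta>. \<forall>i<m. \<eta> i = f \<xi> i}}"
    by (rule openin_continuous_map_preimage[OF assms openin_cantor_cylinder])
  then obtain n where "\<And>\<zeta>. \<forall>i<n. \<zeta> i = \<xi> i \<Longrightarrow> \<forall>i<m. f \<zeta> i = f \<xi> i"
    by (rule openin_cantor_top_contains_cylinder) auto
  then show thesis using that by blast
qed

section \<open>A transducer for a rational homeomorphism\<close>

text \<open>The state reached after reading \<open>v\<close>: the restriction at \<open>v\<close> without the output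
  already forced by \<open>v\<close>.\<close>

definition reduced_restr :: "('a word \<Rightarrow> 'b word) \<Rightarrow> 'a list \<Rightarrow> 'a word \<Rightarrow> 'b word" where
  "reduced_restr f v = strip_lcp (\<lambda>\<xi>. f (v \<frown> \<xi>))"

lemma nonconstant_restr:
  fixes f :: "'a word \<Rightarrow> 'b word" and a b :: 'a
  assumes "inj f" "a \<noteq> b"
  shows "nonconstant (\<lambda>\<xi>. f (v \<frown> \<xi>))"
proof -
  have "(\<lambda>_::nat. a) \<noteq> (\<lambda>_. b)" using assms(2) by (metis)
  then have "f (v \<frown> (\<lambda>_. a)) \<noteq> f (v \<frown> (\<lambda>_. b))" using assms(1) by (metis injD same_concat_eq)
  then show ?thesis unfolding nonconstant_def by blast
qed

lemma reduced_restr_eq_if_equiv_restr: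
  assumes "nonconstant (\<lambda>\<xi>. f (v \<frown> \<xi>))" "equiv_restr f v w"
  shows "reduced_restr f v = reduced_restr f w"
proof -
  obtain x y g where "\<forall>\<xi>. f (v \<frown> \<xi>) = x \<frown> g \<xi> \<and> f (w \<frown> \<xi>) = y \<frown> g \<xi>"
    using assms(2) unfolding equiv_restr_iff by blast
  then have restr: "(\<lambda>\<xi>. f (v \<frown> \<xi>)) = (\<lambda>\<xi>. x \<frown> g \<xi>)" "(\<lambda>\<xi>. f (w \<frown> \<xi>)) = (\<lambda>\<xi>. y \<frown> g \<xi>)"
    by auto
  then have "nonconstant g" using assms(1) by simp
  then show ?thesis unfolding reduced_restr_def restr by (simp add: strip_lcp_conc)
qed

lemma finite_range_reduced_restr:
  assumes "\<And>v. nonconstant (\<lambda>\<xi>. f (v \<frown> \<xi>))" "ss_rational f"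
  shows "finite (range (reduced_restr f))"
proof -
  have "{(v, w). equiv_restr f v w} \<subseteq> kernel (reduced_restr f)"
    using reduced_restr_eq_if_equiv_restr assms(1) by (auto simp: kernel_def)
  then have "finite (UNIV // kernel (reduced_restr f))"
    using finite_refines_finite assms(2) equiv_equiv_restr equiv_kernel
    unfolding ss_rational_def by blast
  then show ?thesis by (simp add: finite_quotient_kernel_iff)
qed

lemma reduced_restr_snoc:
  assumes "nonconstant (\<lambda>\<xi>. f ((v @ [a]) \<frown> \<xi>))"
  shows "reduced_restr f (v @ [a]) = strip_lcp (\<lambda>\<xi>. reduced_restr f v (a ## \<xi>))"
proof -
  let ?p = "prefix (lcp_length (\<lambda>\<xi>. f (v \<frown> \<xi>))) (f (v \<frown> undefined))"
  have "f ((v @ [a]) \<frown> \<xi>) = ?p \<frown> reduced_restr f v (a ## \<xi>)" for \<xi>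
  proof -
    have "f ((v @ [a]) \<frown> \<xi>) = f (v \<frown> (a ## \<xi>))" by simp
    also have "\<dots> = ?p \<frown> reduced_restr f v (a ## \<xi>)"
      unfolding reduced_restr_def by (rule lcp_decomp)
    finally show ?thesis .
  qed
  then have restr: "(\<lambda>\<xi>. f ((v @ [a]) \<frown> \<xi>)) = (\<lambda>\<xi>. ?p \<frown> reduced_restr f v (a ## \<xi>))"
    by blast
  then have "nonconstant (\<lambda>\<xi>. reduced_restr f v (a ## \<xi>))" using assms by simp
  then show ?thesis unfolding reduced_restr_def[of f "v @ [a]"] restr by (simp add: strip_lcp_conc)
qed

lemma reduced_restr_transducer:
  assumes nc: "\<And>v. nonconstant (\<lambda>\<xi>. f (v \<frown> \<xi>))" and init: "reduced_restr f [] = f"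
    and fin: "finite (range (reduced_restr f))"
  obtains Q q0 \<delta> lam where "is_transducer Q q0 \<delta> lam"
    and "\<And>v \<xi>. f (v \<frown> \<xi>) = tout_list q0 \<delta> lam v \<frown> reduced_restr f v \<xi>"
proof -
  let ?R = "reduced_restr f"
  obtain code :: "('a word \<Rightarrow> 'b word) \<Rightarrow> nat" where inj: "inj_on code (range ?R)"
    using finite_imp_inj_to_nat_seg[OF fin] by blast
  define dec where "dec = inv_into (range ?R) code"
  have dec: "dec (code (?R v)) = ?R v" for v
    unfolding dec_def using inj by (simp add: inv_into_f_f)
  define \<delta> where "\<delta> q a = code (strip_lcp (\<lambda>\<xi>. dec q (a ## \<xi>)))" for q a
  define lam where "lam q a = prefix (lcp_length (\<lambda>\<xi>. dec q (a ## \<xi>))) (dec q (a ## undefined))"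
    for q a
  have run: "foldl \<delta> (code f) v = code (?R v) \<and>
      (\<forall>\<xi>. f (v \<frown> \<xi>) = tout_list (code f) \<delta> lam v \<frown> ?R v \<xi>)" for v
  proof (induction v rule: rev_induct)
    case Nil
    then show ?case using init by simp
  next
    case (snoc a v)
    let ?o = "tout_list (code f) \<delta> lam v" and ?h = "\<lambda>\<xi>. ?R v (a ## \<xi>)"
    have "?R (v @ [a]) = strip_lcp ?h" by (rule reduced_restr_snoc[OF nc])
    have "foldl \<delta> (code f) (v @ [a]) = \<delta> (code (?R v)) a" using snoc.IH by simp
    also have "\<dots> = code (?R (v @ [a]))"
      using dec \<open>?R (v @ [a]) = strip_lcp ?h\<close> by (simp add: \<delta>_def)
    finally have state: "foldl \<delta> (code f) (v @ [a]) = code (?R (v @ [a]))" .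
    have "tout_list (code f) \<delta> lam (v @ [a]) = ?o @ lam (code (?R v)) a"
      using snoc.IH by (simp add: tout_list_append)
    then have out: "tout_list (code f) \<delta> lam (v @ [a]) = ?o @ prefix (lcp_length ?h) (?h undefined)"
      using dec by (simp add: lam_def)
    have "f ((v @ [a]) \<frown> \<xi>) = tout_list (code f) \<delta> lam (v @ [a]) \<frown> ?R (v @ [a]) \<xi>" for \<xi>
    proof -
      have "f ((v @ [a]) \<frown> \<xi>) = ?o \<frown> ?h \<xi>" using snoc.IH by simp
      also have "\<dots> = ?o \<frown> (prefix (lcp_length ?h) (?h undefined) \<frown> ?R (v @ [a]) \<xi>)"
        using lcp_decomp[of ?h \<xi> undefined] \<open>?R (v @ [a]) = strip_lcp ?h\<close> by (simp only:)
      finally show ?thesis using out by simp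
    qed
    then show ?case using state by simp
  qed
  have "is_transducer (code ` range ?R) (code f) \<delta> lam"
    unfolding is_transducer_def
  proof (intro conjI ballI allI)
    show "finite (code ` range ?R)" using fin by simp
    show "code f \<in> code ` range ?R" using init by (metis rangeI image_eqI)
    fix q a assume "q \<in> code ` range ?R"
    then obtain v where "q = code (?R v)" by blast
    then have "\<delta> q a = code (?R (v @ [a]))" using run[of v] run[of "v @ [a]"] by simp
    then show "\<delta> q a \<in> code ` range ?R" by blast
  qed
  then show thesis using that run by blast
qed

lemma computes_nondegenerate_if_decomposition:
  assumes cont: "continuous_map cantor_top cantor_top f"
    and decomp: "\<And>v \<xi>. f (v \<frown> \<xi>) = tout_list q0 \<delta> lam v \<frown> R v \<xi>"
    and nc: "\<And>v. nonconstant (R v)" and lcp0: "\<And>v. lcp_length (R v) = 0"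
  shows "computes q0 \<delta> lam f" "nondegenerate q0 \<delta> lam"
proof -
  show "computes q0 \<delta> lam f" unfolding computes_iff_cyl using decomp by simp
  show "nondegenerate q0 \<delta> lam" unfolding nondegenerate_def
  proof (intro allI)
    fix \<xi> m
    obtain n where n: "\<And>\<zeta> i. \<forall>j<n. \<zeta> j = \<xi> j \<Longrightarrow> i < m \<Longrightarrow> f \<zeta> i = f \<xi> i"
      using continuous_map_cantor_prefix[OF cont] by blast
    let ?t = "tout_list q0 \<delta> lam (prefix n \<xi>)" and ?S = "R (prefix n \<xi>)"
    have "m \<le> length ?t"
    proof (rule ccontr)
      assume short: "\<not> m \<le> length ?t"
      have "?S z i = ?S (suffix n \<xi>) i" if "i < m - length ?t" for z i
      proof -
        have "?S z i = f (prefix n \<xi> \<frown> z) (length ?t + i)" using decomp by simp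
        also have "\<dots> = f \<xi> (length ?t + i)" using n[of "prefix n \<xi> \<frown> z"] that by simp
        also have "\<dots> = ?S (suffix n \<xi>) i" using decomp[of "prefix n \<xi>" "suffix n \<xi>"] by simp
        finally show ?thesis .
      qed
      then have "m - length ?t \<le> lcp_length ?S" by (rule lcp_length_maximal[OF nc])
      then show False using lcp0 short by simp
    qed
    then show "\<exists>n. m \<le> length (tout q0 \<delta> lam \<xi> n)" by (metis tout_eq_tout_list)
  qed
qed

lemma computes_if_ss_rational:
  fixes f :: "'a word \<Rightarrow> 'b word" and a a' :: 'a and b b' :: 'b
  assumes "inj f" "surj f" "a \<noteq> a'" "b \<noteq> b'"
    and "continuous_map cantor_top cantor_top f" "ss_rational f"
  shows "\<exists>Q q0 \<delta> lam. is_transducer Q q0 \<delta> lam \<and> nondegenerate q0 \<delta> lam \<and> computes q0 \<delta> lam f"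
proof -
  have nc: "\<And>v. nonconstant (\<lambda>\<xi>. f (v \<frown> \<xi>))" by (rule nonconstant_restr[OF assms(1,3)])
  have "strip_lcp f = f"
    using lcp_length_surj[OF assms(2,4)] by (simp add: strip_lcp_def fun_eq_iff)
  then have init: "reduced_restr f [] = f" by (simp add: reduced_restr_def)
  obtain Q q0 \<delta> lam where T: "is_transducer Q q0 \<delta> lam"
    and decomp: "\<And>v \<xi>. f (v \<frown> \<xi>) = tout_list q0 \<delta> lam v \<frown> reduced_restr f v \<xi>"
    using reduced_restr_transducer[OF nc init finite_range_reduced_restr[OF nc assms(6)]] by metis
  have "nonconstant (reduced_restr f v)" "lcp_length (reduced_restr f v) = 0" for v
    using nc[of v] by (simp_all add: reduced_restr_def nonconstant_strip_lcp lcp_length_strip_lcp)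
  then have "computes q0 \<delta> lam f" "nondegenerate q0 \<delta> lam"
    using computes_nondegenerate_if_decomposition[OF assms(5) decomp] by blast+
  then show ?thesis using T by blast
qed

lemma ex_distinct_if_card_ge_2:
  assumes "2 \<le> CARD('a::finite)"
  shows "\<exists>a b::'a. a \<noteq> b"
proof -
  have "\<not> (\<forall>a\<in>UNIV. \<forall>b\<in>UNIV. a = (b::'a))"
    using assms card_le_Suc0_iff_eq[of "UNIV :: 'a set"] by simp
  then show ?thesis by blast
qed

theorem mainTheorem10:
  fixes f :: "'a::finite word \<Rightarrow> 'b::finite word"
  assumes "CARD('a) \<ge> 2" and "CARD('b) \<ge> 2"
    and "homeomorphic_map (cantor_top :: 'a word topology) (cantor_top :: 'b word topology) f"
  shows "ss_rational f \<longleftrightarrow>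
    (\<exists>Q q0 \<delta> lam. is_transducer Q q0 \<delta> lam \<and> nondegenerate q0 \<delta> lam \<and> computes q0 \<delta> lam f)"
proof -
  have "inj f" "surj f"
    using homeomorphic_imp_injective_map[OF assms(3)] homeomorphic_imp_surjective_map[OF assms(3)]
    by simp_all
  moreover obtain a a' :: 'a where "a \<noteq> a'" using ex_distinct_if_card_ge_2[OF assms(1)] by blast
  moreover obtain b b' :: 'b where "b \<noteq> b'" using ex_distinct_if_card_ge_2[OF assms(2)] by blast
  moreover have "continuous_map cantor_top cantor_top f"
    using homeomorphic_imp_continuous_map[OF assms(3)] .
  ultimately show ?thesis using computes_if_ss_rational[of f a a' b b'] ss_rational_if_computes by blast
qed

end
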